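(* Let $v\equiv 4\pmod 6$. If a $(v,3,2)$-BIBD $(X,\mathcal{A})$ has a strong nesting $\phi:\mathcal{A}\to Y$ with $X\subseteq Y$ and $|Y|=w$, then $w\ge 3v/2+1$.
   Context: A $(v,k,\lambda)$-BIBD is a pair $(X,\mathcal{A})$ where $X$ is a set of $v$ points and $\mathcal{A}$ is a multiset of $k$-subsets of $X$ (blocks) such that every pair of distinct points lies in exactly $\lambda$ blocks. Given a $(v,k,\lambda)$-BIBD $(X,\mathcal{A})$ and a set $Y\supseteq X$ with $|Y|=w$, a map $\phi:\mathcal{A}\to Y$ is a strong nesting if (1) $\phi(A)\notin A$ for every block $A\in\mathcal{A}$, and (2) the multiset of pairs $\{\{x,\phi(A)\}: A\in\mathcal{A},\ x\in A\}$ (one pair for each block $A$, counted with multiplicity in $\mathcal{A}$, and each $x\in A$) consists of distinct pairs. *)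

theory Defs
  imports Complex_Main
begin

text \<open>A (v,k,lambda)-BIBD on point set X whose blocks are indexed by a finite set I
  (so repeated blocks are allowed, i.e. the block collection is a multiset).\<close>
definition is_bibd :: "'a set \<Rightarrow> 'i set \<Rightarrow> ('i \<Rightarrow> 'a set) \<Rightarrow> nat \<Rightarrow> nat \<Rightarrow> nat \<Rightarrow> bool" where
  "is_bibd X I B v k lam \<longleftrightarrow>
     finite X \<and> card X = v \<and> finite I \<and>
     (\<forall>i\<in>I. B i \<subseteq> X \<and> card (B i) = k) \<and>
     (\<forall>x\<in>X. \<forall>y\<in>X. x \<noteq> y \<longrightarrow> card {i\<in>I. x \<in> B i \<and> y \<in> B i} = lam)"

definition strong_nesting :: "'i set \<Rightarrow> ('i \<Rightarrow> 'a set) \<Rightarrow> 'a set \<Rightarrow> ('i \<Rightarrow> 'a) \<Rightarrow> bool" where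
  "strong_nesting I B Y phi \<longleftrightarrow>
     (\<forall>i\<in>I. phi i \<in> Y \<and> phi i \<notin> B i) \<and>
     inj_on (\<lambda>(i, x). {x, phi i}) (SIGMA i:I. B i)"

end

theory Submission
  imports Defs
begin

text \<open>Let \<open>n(y)\<close> be the number of blocks nested at \<open>y\<close>. A block nested at \<open>y\<close> yields three
  pairs \<open>{x, y}\<close> with \<open>x \<in> X\<close>, and so does each block through \<open>y\<close> nested at a point of \<open>X\<close>;
  since all these pairs are distinct and a point of \<open>X\<close> lies in \<open>v - 1\<close> blocks, for \<open>y \<in> X\<close> the
  \<open>3 n(y)\<close> pairs are paid for by blocks through \<open>y\<close> nested outside \<open>X\<close>, of which there are at
  most \<open>K = |Y - X|\<close>, so \<open>n(y) \<le> K div 3\<close>. For \<open>z \<notin> X\<close> we get \<open>3 n(z) \<le> v\<close>, and \<open>3 \<nmid> v\<close>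
  gives \<open>3 n(z) \<le> v - 1\<close>. Summing over \<open>Y\<close> and using \<open>3 |I| = v (v - 1)\<close> yields
  \<open>v (v - 1) \<le> 3 v (K div 3) + K (v - 1)\<close>, which for \<open>v \<equiv> 4 (mod 6)\<close> forces \<open>2 K \<ge> v + 2\<close>.\<close>

locale bibd =
  fixes X :: "'a set" and I :: "'i set" and B :: "'i \<Rightarrow> 'a set" and v k lam :: nat
  assumes is_bibd: "is_bibd X I B v k lam"
begin

lemma finite_points: "finite X"
  and card_points: "card X = v"
  and finite_blocks: "finite I"
  and block_subset: "i \<in> I \<Longrightarrow> B i \<subseteq> X"
  and card_block: "i \<in> I \<Longrightarrow> card (B i) = k"
  and card_blocks_through_pair:
    "x \<in> X \<Longrightarrow> y \<in> X \<Longrightarrow> x \<noteq> y \<Longrightarrow> card {i\<in>I. x \<in> B i \<and> y \<in> B i} = lam"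
  using is_bibd unfolding is_bibd_def by auto

lemma finite_block: "i \<in> I \<Longrightarrow> finite (B i)"
  using block_subset finite_points finite_subset by blast

definition replication :: "'a \<Rightarrow> nat" where
  "replication y = card {i\<in>I. y \<in> B i}"

lemma replication:
  assumes "y \<in> X"
  shows "(k - 1) * replication y = lam * (v - 1)"
proof -
  have "lam * (v - 1) = (\<Sum>x\<in>X - {y}. card {i\<in>I. x \<in> B i \<and> y \<in> B i})"
    using assms card_blocks_through_pair finite_points card_points by simp
  also have "\<dots> = (\<Sum>i\<in>I. if y \<in> B i then k - 1 else 0)"
  proof (rule sum_multicount_gen)
    show "\<forall>i\<in>I. card {x\<in>X - {y}. x \<in> B i \<and> y \<in> B i} = (if y \<in> B i then k - 1 else 0)"
    proof
      fix i assume i: "i \<in> I"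
      show "card {x\<in>X - {y}. x \<in> B i \<and> y \<in> B i} = (if y \<in> B i then k - 1 else 0)"
      proof (cases "y \<in> B i")
        case True
        then have "{x\<in>X - {y}. x \<in> B i \<and> y \<in> B i} = B i - {y}"
          using block_subset[OF i] by auto
        then show ?thesis using True card_block[OF i] finite_block[OF i] by simp
      qed simp
    qed
  qed (use finite_points finite_blocks in auto)
  also have "\<dots> = (k - 1) * replication y"
    unfolding replication_def using finite_blocks by (simp add: sum.If_cases Int_def)
  finally show ?thesis by simp
qed

lemma sum_replication: "(\<Sum>y\<in>X. replication y) = k * card I"
  unfolding replication_def
proof (rule sum_multicount[OF finite_points finite_blocks])
  show "\<forall>i\<in>I. card {y\<in>X. y \<in> B i} = k"
  proof
    fix i assume i: "i \<in> I"
    then have "{y\<in>X. y \<in> B i} = B i" using block_subset by auto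
    then show "card {y\<in>X. y \<in> B i} = k" using card_block[OF i] by simp
  qed
qed

end

lemma strong_nesting_inj_on_blocks_through:
  assumes "strong_nesting I B Y phi"
  shows "inj_on phi {i\<in>I. y \<in> B i}"
proof
  fix i j assume "i \<in> {i\<in>I. y \<in> B i}" "j \<in> {i\<in>I. y \<in> B i}" "phi i = phi j"
  then have "(i, y) \<in> (SIGMA i:I. B i)" "(j, y) \<in> (SIGMA i:I. B i)"
    "(\<lambda>(i, x). {x, phi i}) (i, y) = (\<lambda>(i, x). {x, phi i}) (j, y)" by auto
  with assms show "i = j" unfolding strong_nesting_def by (blast dest: inj_onD)
qed

locale nested_bibd = bibd X I B v k lam
  for X :: "'a set" and I :: "'i set" and B v k lam +
  fixes Y :: "'a set" and phi :: "'i \<Rightarrow> 'a"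
  assumes nesting: "strong_nesting I B Y phi"
    and finite_Y: "finite Y"
begin

lemma phi_in_Y: "i \<in> I \<Longrightarrow> phi i \<in> Y"
  and phi_notin_block: "i \<in> I \<Longrightarrow> phi i \<notin> B i"
  and inj_on_pairs: "inj_on (\<lambda>(i, x). {x, phi i}) (SIGMA i:I. B i)"
  using nesting unfolding strong_nesting_def by auto

definition nest_count :: "'a \<Rightarrow> nat" where
  "nest_count y = card {i\<in>I. phi i = y}"

lemma sum_nest_count: "(\<Sum>y\<in>Y. nest_count y) = card I"
  unfolding nest_count_def
proof -
  have once: "\<forall>i\<in>I. card {y\<in>Y. phi i = y} = 1"
  proof
    fix i assume "i \<in> I"
    then have "{y\<in>Y. phi i = y} = {phi i}" using phi_in_Y by auto
    then show "card {y\<in>Y. phi i = y} = 1" by simp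
  qed
  then show "(\<Sum>y\<in>Y. card {i\<in>I. phi i = y}) = card I"
    using sum_multicount[OF finite_Y finite_blocks once] by simp
qed

lemma pairs_at_point_bound:
  "k * nest_count y + card {i\<in>I. y \<in> B i \<and> phi i \<in> X} \<le> card (X - {y})"
proof -
  let ?pair = "\<lambda>(i, x). {x, phi i}"
  define nested where "nested = (SIGMA i:{i\<in>I. phi i = y}. B i)"
  define through where "through = (\<lambda>i. (i, y)) ` {i\<in>I. y \<in> B i \<and> phi i \<in> X}"
  have "card nested = k * nest_count y"
    unfolding nested_def nest_count_def using finite_blocks finite_block card_block
    by (subst card_SigmaI) auto
  moreover have "card through = card {i\<in>I. y \<in> B i \<and> phi i \<in> X}"
    unfolding through_def by (simp add: card_image inj_on_def)
  moreover have "nested \<inter> through = {}"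
    unfolding nested_def through_def using phi_notin_block by auto
  moreover have "finite nested" "finite through"
    unfolding nested_def through_def using finite_blocks finite_block by auto
  ultimately have "k * nest_count y + card {i\<in>I. y \<in> B i \<and> phi i \<in> X}
      = card (nested \<union> through)"
    by (simp add: card_Un_disjoint)
  also have "\<dots> = card (?pair ` (nested \<union> through))"
  proof (rule card_image[symmetric], rule inj_on_subset[OF inj_on_pairs])
    show "nested \<union> through \<subseteq> (SIGMA i:I. B i)"
      unfolding nested_def through_def by auto
  qed
  also have "\<dots> \<le> card ((\<lambda>x. {x, y}) ` (X - {y}))"
  proof (rule card_mono)
    show "?pair ` (nested \<union> through) \<subseteq> (\<lambda>x. {x, y}) ` (X - {y})"
      unfolding nested_def through_def
      using block_subset phi_notin_block by (fastforce simp: insert_commute)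
  qed (use finite_points in simp)
  also have "\<dots> \<le> card (X - {y})"
    by (rule card_image_le) (use finite_points in simp)
  finally show ?thesis .
qed

lemma nest_count_point_bound:
  assumes "y \<in> X"
  shows "k * nest_count y + replication y \<le> card (X - {y}) + card (Y - X)"
proof -
  have "replication y = card {i\<in>I. y \<in> B i \<and> phi i \<in> X} + card {i\<in>I. y \<in> B i \<and> phi i \<notin> X}"
    unfolding replication_def using finite_blocks
    by (subst card_Un_disjoint[symmetric]) (auto intro: arg_cong[where f = card])
  moreover have "card {i\<in>I. y \<in> B i \<and> phi i \<notin> X} \<le> card (Y - X)"
  proof -
    have "card {i\<in>I. y \<in> B i \<and> phi i \<notin> X} = card (phi ` {i\<in>I. y \<in> B i \<and> phi i \<notin> X})"
      by (rule card_image[symmetric], rule inj_on_subset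
          [OF strong_nesting_inj_on_blocks_through[OF nesting, of y]]) auto
    also have "\<dots> \<le> card (Y - X)"
      using phi_in_Y finite_Y by (intro card_mono) auto
    finally show ?thesis .
  qed
  ultimately show ?thesis using pairs_at_point_bound[of y] by linarith
qed

lemma nest_count_outside_point_bound:
  assumes "y \<notin> X"
  shows "k * nest_count y \<le> v"
  using pairs_at_point_bound[of y] assms card_points by simp

end

lemma mod_6_eq_4_counting_bound:
  fixes v K :: nat
  assumes "v mod 6 = 4" and "v * (v - 1) \<le> 3 * v * (K div 3) + K * (v - 1)"
  shows "v + 2 \<le> 2 * K"
proof (rule ccontr)
  assume "\<not> v + 2 \<le> 2 * K"
  obtain q where v: "v = 6 * q + 4"
    using assms(1) by (metis mod_div_mult_eq add.commute mult.commute)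
  then have "K \<le> 3 * q + 2" using \<open>\<not> v + 2 \<le> 2 * K\<close> by simp
  then consider "K \<le> 3 * q + 1" | "K = 3 * q + 2" by linarith
  then show False
  proof cases
    case 1
    have "3 * v * (K div 3) + K * (v - 1) \<le> v * K + K * (v - 1)"
      by simp
    also have "\<dots> \<le> v * (3 * q + 1) + (3 * q + 1) * (v - 1)"
      using 1 by (intro add_mono mult_mono) auto
    also have "\<dots> < v * (v - 1)" using v by (simp add: algebra_simps)
    finally show False using assms(2) by simp
  next
    case 2
    then have "K div 3 = q" by simp
    then show False using assms(2) v 2 by (simp add: algebra_simps)
  qed
qed

theorem lemma4p4:
  fixes X Y :: "'a set" and I :: "'i set" and B :: "'i \<Rightarrow> 'a set" and phi :: "'i \<Rightarrow> 'a"
    and v w :: nat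
  assumes "v mod 6 = 4"
    and "is_bibd X I B v 3 2"
    and "X \<subseteq> Y" and "finite Y" and "card Y = w"
    and "strong_nesting I B Y phi"
  shows "real w \<ge> 3 * real v / 2 + 1"
proof -
  interpret nested_bibd X I B v 3 2 Y phi
    by unfold_locales (use assms in auto)
  define K where "K = card (Y - X)"
  have w: "w = v + K"
    unfolding K_def using card_Diff_subset[OF finite_points assms(3)] card_mono[OF assms(4,3)]
      assms(5) card_points by simp
  have replication: "replication y = v - 1" if "y \<in> X" for y
    using replication[OF that] by simp
  have old: "nest_count y \<le> K div 3" if "y \<in> X" for y
    using nest_count_point_bound[OF that] replication[OF that] card_points finite_points that
    unfolding K_def by simp
  have new: "3 * nest_count z \<le> v - 1" if "z \<in> Y - X" for z
  proof -
    have "3 * nest_count z \<le> v" using nest_count_outside_point_bound that by blast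
    then show ?thesis using assms(1) by presburger
  qed
  have "v * (v - 1) = 3 * (\<Sum>y\<in>Y. nest_count y)"
    using sum_replication replication card_points sum_nest_count by simp
  also have "\<dots> = 3 * (\<Sum>y\<in>X. nest_count y) + (\<Sum>z\<in>Y - X. 3 * nest_count z)"
    using sum.subset_diff[OF assms(3,4), of nest_count] by (simp add: sum_distrib_left)
  also have "\<dots> \<le> 3 * v * (K div 3) + K * (v - 1)"
    using sum_mono[of X nest_count "\<lambda>_. K div 3"] sum_mono[of "Y - X" _ "\<lambda>_. v - 1"] old new
    card_points unfolding K_def by (intro add_mono) auto
  finally have "v + 2 \<le> 2 * K" using mod_6_eq_4_counting_bound assms(1) by blast
  then show ?thesis using w by simp
qed

end
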